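(* Assume $E$ is countable and let $\gamma$ be a POS. Then for every $\Delta\in\mathcal T_b$, every $\eta\in\Omega$ and every $\sigma\in\Omega$, $$\gamma_\Delta\bigl(\{\zeta:\zeta_\Delta=\sigma_\Delta\}\bigm|\eta\bigr)=\prod_{x\in\Delta}\gamma_x\bigl(\sigma_x\bigm|\sigma_\Delta\eta_{\Delta_-\cup\Delta^*}\bigr),$$ where $\sigma_\Delta\eta_{\Delta_-\cup\Delta^*}$ denotes any configuration equal to $\sigma$ on $\Delta$ and to $\eta$ on $\Delta_-\cup\Delta^*$.
   Context: $(S,\le)$ is a countable partially ordered set. For $x\in S$ write $x_-=\{y\in S:y<x\}$, $x_+=\{y\in S:y>x\}$. For $\Upsilon\subset S$: $\max(\Upsilon)=\{x\in\Upsilon: y\notin\Upsilon\text{ for all }y>x\}$, $\min(\Upsilon)=\{x\in\Upsilon: y\notin\Upsilon\text{ for all }y<x\}$, the past $\Upsilon_-=\{x\in S\setminus\Upsilon:\exists y\in\Upsilon,\ x<y\}$, the future $\Upsilon_+=\{x\in S\setminus\Upsilon:\exists y\in\Upsilon,\ x>y\}$, and the outer time $\Upsilon^*=\{x\in S: x\text{ is comparable with no }y\in\Upsilon\}$. Standing assumptions: for every $x\in S$, $\max(x_-)$ and $\min(x_+)$ are finite, every $y<x$ satisfies $y\le y_0<x$ for some $y_0\in\max(x_-)$, every $z>x$ satisfies $z\ge z_0>x$ for some $z_0\in\min(x_+)$; and $S$ has no minimal element. A finite set $\Lambda\subset S$ is a time box if $\Lambda_-\cap\Lambda_+=\emptyset$;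 $\mathcal T_b$ is the set of time boxes. $\Omega=E^S$ with product $\sigma$-algebra $\mathcal F$; $\mathcal F_\Upsilon$ is generated by coordinates in $\Upsilon$. A proper oriented kernel on $\Lambda\in\mathcal T_b$ is a map $\gamma_\Lambda:\mathcal F_{S\setminus\Lambda_+}\times\Omega\to[0,1]$ such that (a) $\gamma_\Lambda(\cdot,\omega)$ is a probability measure; (b) $\gamma_\Lambda(A,\cdot)$ is $\mathcal F_{\Lambda_-\cup\Lambda^*}$-measurable for $A\in\mathcal F_{S\setminus\Lambda_+}$; (c) $\gamma_\Lambda(A,\cdot)$ is $\mathcal F_{\Lambda_-}$-measurable for $A\in\mathcal F_\Lambda$; (d) $\gamma_\Lambda(B,\omega)=\mathbf 1_B(\omega)$ for $B\in\mathcal F_{\Lambda_-\cup\Lambda^*}$. A POS is a family $\gamma=(\gamma_\Lambda)_{\Lambda\in\mathcal T_b}$ of proper oriented kernels with $\gamma_\Delta\gamma_\Lambda=\gamma_\Delta$ on $\mathcal F_{S\setminus\Lambda_+}$ whenever $\Lambda\subset\Delta$ are time boxes, where $(\gamma_\Delta\gamma_\Lambda)(f\mid\omega)=\int\gamma_\Lambda(f\mid\sigma)\gamma_\Delta(d\sigma,\omega)$. We write $\gamma_x=\gamma_{\{x\}}$ and $\gamma_x(a\mid\omega)=\gamma_x(\{\zeta:\zeta_x=a\},\omega)$. *)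

theory Defs
  imports "HOL-Analysis.Analysis"
begin

text \<open>The countable poset S is the type 's (class order, countable);
 the countable state space E is the type 'e; configurations Omega = 's => 'e.\<close>

definition maxset :: "('s::order) set \<Rightarrow> 's set" where
  "maxset U = {x \<in> U. \<forall>y. x < y \<longrightarrow> y \<notin> U}"

definition minset :: "('s::order) set \<Rightarrow> 's set" where
  "minset U = {x \<in> U. \<forall>y. y < x \<longrightarrow> y \<notin> U}"

definition below :: "('s::order) \<Rightarrow> 's set" where
  "below x = {y. y < x}"

definition above :: "('s::order) \<Rightarrow> 's set" where
  "above x = {y. y > x}"

definition standing_assms :: "('s::{order,countable}) itself \<Rightarrow> bool" where
  "standing_assms _ \<longleftrightarrow>
     (\<forall>x::'s. finite (maxset (below x)) \<and> finite (minset (above x))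
        \<and> (\<forall>y. y < x \<longrightarrow> (\<exists>y0\<in>maxset (below x). y \<le> y0 \<and> y0 < x))
        \<and> (\<forall>z. z > x \<longrightarrow> (\<exists>z0\<in>minset (above x). z \<ge> z0 \<and> z0 > x)))
     \<and> (\<forall>x::'s. \<exists>y. y < x)"

definition past :: "('s::order) set \<Rightarrow> 's set" where
  "past U = {x. x \<notin> U \<and> (\<exists>y\<in>U. x < y)}"

definition future :: "('s::order) set \<Rightarrow> 's set" where
  "future U = {x. x \<notin> U \<and> (\<exists>y\<in>U. y < x)}"

definition outer :: "('s::order) set \<Rightarrow> 's set" where
  "outer U = {x. \<forall>y\<in>U. \<not> (x \<le> y) \<and> \<not> (y \<le> x)}"

definition time_box :: "('s::order) set \<Rightarrow> bool" where
  "time_box L \<longleftrightarrow> finite L \<and> past L \<inter> future L = {}"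

text \<open>Generators of F_U: cylinder sets on coordinates in U (E carries the discrete sigma-algebra).\<close>
definition gen :: "'s set \<Rightarrow> ('s \<Rightarrow> 'e) set set" where
  "gen U = {{\<omega>. \<omega> x \<in> A} | x A. x \<in> U}"

definition Fsig :: "'s set \<Rightarrow> ('s \<Rightarrow> 'e) set set" where
  "Fsig U = sigma_sets UNIV (gen U)"

definition FM :: "'s set \<Rightarrow> ('s \<Rightarrow> 'e) measure" where
  "FM U = sigma UNIV (gen U)"

type_synonym ('s, 'e) kernel = "('s \<Rightarrow> 'e) set \<Rightarrow> ('s \<Rightarrow> 'e) \<Rightarrow> real"

definition proper_oriented_kernel :: "('s::order) set \<Rightarrow> ('s, 'e) kernel \<Rightarrow> bool" where
  "proper_oriented_kernel L g \<longleftrightarrow>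
     (\<forall>\<omega>. measure_space UNIV (Fsig (- future L)) (\<lambda>A. ennreal (g A \<omega>))
          \<and> (\<forall>A\<in>Fsig (- future L). 0 \<le> g A \<omega>) \<and> g UNIV \<omega> = 1)
   \<and> (\<forall>A\<in>Fsig (- future L). g A \<in> borel_measurable (FM (past L \<union> outer L)))
   \<and> (\<forall>A\<in>Fsig L. g A \<in> borel_measurable (FM (past L)))
   \<and> (\<forall>B\<in>Fsig (past L \<union> outer L). \<forall>\<omega>. g B \<omega> = indicator B \<omega>)"

definition kmeasure :: "('s::order) set \<Rightarrow> ('s, 'e) kernel \<Rightarrow> ('s \<Rightarrow> 'e) \<Rightarrow> ('s \<Rightarrow> 'e) measure" where
  "kmeasure L g \<omega> = measure_of UNIV (Fsig (- future L)) (\<lambda>A. ennreal (g A \<omega>))"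

definition kcomp :: "('s::order) set \<Rightarrow> ('s, 'e) kernel \<Rightarrow> ('s, 'e) kernel
                     \<Rightarrow> ('s \<Rightarrow> 'e) set \<Rightarrow> ('s \<Rightarrow> 'e) \<Rightarrow> ennreal" where
  "kcomp D gD gL A \<omega> = (\<integral>\<^sup>+ s. ennreal (gL A s) \<partial>(kmeasure D gD \<omega>))"

definition POS :: "('s::order set \<Rightarrow> ('s, 'e) kernel) \<Rightarrow> bool" where
  "POS g \<longleftrightarrow>
     (\<forall>L. time_box L \<longrightarrow> proper_oriented_kernel L (g L))
   \<and> (\<forall>L D. time_box L \<and> time_box D \<and> L \<subseteq> D \<longrightarrow>
        (\<forall>A \<in> Fsig (- future L) \<inter> Fsig (- future D). \<forall>\<omega>.
            kcomp D (g D) (g L) A \<omega> = ennreal (g D A \<omega>)))"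

end

theory Submission
  imports Defs
begin

(* Proof idea: induction on the size of the time box D.  Remove a maximal
   element x of D; then L = D - {x} is again a time box, and
     (1) marginal:  by consistency gamma_D gamma_L = gamma_D and because
         gamma_D(. | eta) is concentrated on configurations that agree with
         eta on the past of D, the L-marginal of gamma_D(. | eta) is
         gamma_L(. | xi);
     (2) chaining:  by consistency gamma_D gamma_x = gamma_D, and because the
         L-cylinder is measurable w.r.t. the past and outer time of x,
         gamma_D(L-cylinder and zeta_x = sigma_x | eta)
           = gamma_x(sigma_x | xi) * gamma_D(L-cylinder | eta). *)

lemma Fsig_mono: "U \<subseteq> V \<Longrightarrow> Fsig U \<subseteq> Fsig V"
  unfolding Fsig_def by (rule sigma_sets_mono') (auto simp: gen_def)

lemma sets_FM: "sets (FM U) = Fsig U"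
  unfolding FM_def Fsig_def by (rule sets_measure_of) auto

lemma space_FM: "space (FM U) = UNIV"
  unfolding FM_def by (simp add: space_measure_of_conv)

lemma coordinate_in_Fsig: "y \<in> U \<Longrightarrow> {\<zeta>. \<zeta> y \<in> C} \<in> Fsig U"
  unfolding Fsig_def gen_def by (rule sigma_sets.Basic) blast

lemma Fsig_Compl: "X \<in> Fsig U \<Longrightarrow> - X \<in> Fsig U"
  using sets.compl_sets[of X "FM U"] by (simp add: sets_FM space_FM Compl_eq_Diff_UNIV)

lemma Fsig_Int: "X \<in> Fsig U \<Longrightarrow> Y \<in> Fsig U \<Longrightarrow> X \<inter> Y \<in> Fsig U"
  using sets.Int[of X "FM U" Y] by (simp add: sets_FM)

lemma Fsig_determined:
  assumes "X \<in> Fsig U" "\<forall>y\<in>U. s y = t y"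
  shows "s \<in> X \<longleftrightarrow> t \<in> X"
  using assms(1) unfolding Fsig_def
proof (induction rule: sigma_sets.induct)
  case (Basic a)
  then show ?case using assms(2) by (auto simp: gen_def)
qed auto

lemma measurable_FM_determined:
  fixes f :: "('s \<Rightarrow> 'e) \<Rightarrow> real"
  assumes "f \<in> borel_measurable (FM U)" "\<forall>y\<in>U. s y = t y"
  shows "f s = f t"
proof -
  have "f -` {f s} \<inter> space (FM U) \<in> sets (FM U)"
    by (rule measurable_sets[OF assms(1) borel_closed[OF closed_singleton]])
  then have "f -` {f s} \<in> Fsig U" by (simp add: sets_FM space_FM)
  from Fsig_determined[OF this assms(2)] show ?thesis by simp
qed

definition cylinder :: "'s set \<Rightarrow> ('s \<Rightarrow> 'e) \<Rightarrow> ('s \<Rightarrow> 'e) set" where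
  "cylinder L \<sigma> = {\<zeta>. \<forall>y\<in>L. \<zeta> y = \<sigma> y}"

lemma cylinder_in_Fsig:
  assumes "finite L" "L \<subseteq> U"
  shows "cylinder L \<sigma> \<in> Fsig U"
proof -
  have "{\<zeta>\<in>space (FM U). \<forall>y\<in>L. \<zeta> y = \<sigma> y} \<in> sets (FM U)"
    using assms coordinate_in_Fsig[of _ U "{\<sigma> _}"]
    by (intro sets.sets_Collect_finite_All) (auto simp: sets_FM space_FM)
  then show ?thesis by (simp add: cylinder_def sets_FM space_FM)
qed

lemma cylinder_cong: "\<forall>y\<in>L. \<sigma> y = \<xi> y \<Longrightarrow> cylinder L \<sigma> = cylinder L \<xi>"
  unfolding cylinder_def by auto

lemma cylinder_remove:
  "x \<in> D \<Longrightarrow> cylinder D \<sigma> = cylinder (D - {x}) \<sigma> \<inter> {\<zeta>. \<zeta> x = \<sigma> x}"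
  unfolding cylinder_def by auto

text \<open>In a time box, past and outer time are disjoint from the future, so events
  of the past and outer time are in the domain of the kernel.\<close>
lemma Fsig_past_outer_not_future:
  "time_box L \<Longrightarrow> Fsig (past L \<union> outer L) \<subseteq> Fsig (- future L)"
  by (intro Fsig_mono) (auto simp: time_box_def past_def future_def outer_def)

context
  fixes g :: "('s::order) set \<Rightarrow> ('s, 'e) kernel"
  assumes POS: "POS g"
begin

lemma proper_kernel: "time_box L \<Longrightarrow> proper_oriented_kernel L (g L)"
  using POS unfolding POS_def by blast

lemma kernel_nonneg: "time_box L \<Longrightarrow> X \<in> Fsig (- future L) \<Longrightarrow> 0 \<le> g L X \<omega>"
  using proper_kernel unfolding proper_oriented_kernel_def by blast

lemma kernel_proper:
  "time_box L \<Longrightarrow> X \<in> Fsig (past L \<union> outer L) \<Longrightarrow> g L X \<omega> = indicator X \<omega>"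
  using proper_kernel unfolding proper_oriented_kernel_def by blast

lemma kernel_depends_on_past:
  assumes "time_box L" "A \<in> Fsig L" "\<forall>y\<in>past L. s y = t y"
  shows "g L A s = g L A t"
proof -
  have "g L A \<in> borel_measurable (FM (past L))"
    using proper_kernel[OF assms(1)] assms(2) unfolding proper_oriented_kernel_def by blast
  then show ?thesis using assms(3) by (rule measurable_FM_determined)
qed

lemma kmeasure_sets: "time_box L \<Longrightarrow> sets (kmeasure L (g L) \<omega>) = Fsig (- future L)"
proof -
  assume "time_box L"
  then have "sigma_algebra UNIV (Fsig (- future L) :: ('s \<Rightarrow> 'e) set set)"
    using proper_kernel unfolding proper_oriented_kernel_def measure_space_def by blast
  then show ?thesis
    unfolding kmeasure_def using sets_measure_of[of "Fsig (- future L)" UNIV]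
      sigma_algebra.sigma_sets_eq by fastforce
qed

lemma kmeasure_space: "space (kmeasure L (g L) \<omega>) = UNIV"
  unfolding kmeasure_def by (simp add: space_measure_of_conv)

lemma emeasure_kmeasure:
  assumes "time_box L" "X \<in> Fsig (- future L)"
  shows "emeasure (kmeasure L (g L) \<omega>) X = ennreal (g L X \<omega>)"
proof -
  have "measure_space UNIV (Fsig (- future L)) (\<lambda>A. ennreal (g L A \<omega>))"
    using proper_kernel[OF assms(1)] unfolding proper_oriented_kernel_def by blast
  then show ?thesis
    unfolding kmeasure_def using assms(2)
    by (intro emeasure_measure_of_sigma) (auto simp: measure_space_def)
qed

text \<open>gamma_L(. | \<omega>) is a probability measure.\<close>
lemma nn_integral_kmeasure_const:
  assumes "time_box L"
  shows "(\<integral>\<^sup>+ s. c \<partial>kmeasure L (g L) \<omega>) = c"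
proof -
  have "UNIV \<in> Fsig (- future L)" by (simp add: Fsig_def sigma_sets_top)
  then have "emeasure (kmeasure L (g L) \<omega>) UNIV = ennreal (g L UNIV \<omega>)"
    by (rule emeasure_kmeasure[OF assms])
  also have "g L UNIV \<omega> = 1"
    using proper_kernel[OF assms] unfolding proper_oriented_kernel_def by blast
  finally show ?thesis by (simp add: kmeasure_space)
qed

lemma kernel_consistency:
  assumes "time_box L" "time_box D" "L \<subseteq> D"
    and "X \<in> Fsig (- future L)" "X \<in> Fsig (- future D)"
  shows "ennreal (g D X \<eta>) = (\<integral>\<^sup>+ s. ennreal (g L X s) \<partial>kmeasure D (g D) \<eta>)"
  using POS assms unfolding POS_def kcomp_def by auto

lemma kernel_restrict:
  assumes L: "time_box L"
    and A: "A \<in> Fsig (past L \<union> outer L)" and B: "B \<in> Fsig (- future L)"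
  shows "g L (A \<inter> B) s = indicator A s * g L B s"
proof -
  let ?\<nu> = "kmeasure L (g L) s"
  have sub: "Fsig (past L \<union> outer L) \<subseteq> Fsig (- future L)"
    using Fsig_past_outer_not_future[OF L] .
  have A': "A \<in> Fsig (- future L)" and nA': "- A \<in> Fsig (- future L)"
    using A Fsig_Compl[OF A] sub by blast+
  have AB: "A \<inter> B \<in> Fsig (- future L)" using Fsig_Int[OF A' B] .
  show ?thesis
  proof (cases "s \<in> A")
    case True
    have "emeasure ?\<nu> (- A) = 0"
      using emeasure_kmeasure[OF L nA'] kernel_proper[OF L Fsig_Compl[OF A], of s] True by simp
    then have "- A \<in> null_sets ?\<nu>" using nA' kmeasure_sets[OF L] by (auto intro: null_setsI)
    then have "emeasure ?\<nu> (B - - A) = emeasure ?\<nu> B"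
      using B kmeasure_sets[OF L] emeasure_Diff_null_set by blast
    moreover have "B - - A = A \<inter> B" by auto
    ultimately have "ennreal (g L (A \<inter> B) s) = ennreal (g L B s)"
      using emeasure_kmeasure[OF L AB] emeasure_kmeasure[OF L B] by simp
    then show ?thesis using True kernel_nonneg[OF L AB] kernel_nonneg[OF L B] by simp
  next
    case False
    have "emeasure ?\<nu> (A \<inter> B) \<le> emeasure ?\<nu> A"
      using A' kmeasure_sets[OF L] by (intro emeasure_mono) auto
    also have "\<dots> = 0"
      using emeasure_kmeasure[OF L A'] kernel_proper[OF L A, of s] False by simp
    finally have "ennreal (g L (A \<inter> B) s) = 0"
      using emeasure_kmeasure[OF L AB] by simp
    then show ?thesis using False kernel_nonneg[OF L AB, of s] by simp
  qed
qed

end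

text \<open>For countable S, gamma_D(. | eta) is concentrated on configurations agreeing
  with eta on the past of D (countably many null sets, one per site).\<close>
lemma AE_kmeasure_past:
  fixes g :: "('s::{order,countable}) set \<Rightarrow> ('s, 'e) kernel"
  assumes POS: "POS g" and D: "time_box D"
  shows "AE s in kmeasure D (g D) \<eta>. \<forall>y\<in>past D. s y = \<eta> y"
proof -
  let ?\<mu> = "kmeasure D (g D) \<eta>"
  have "AE s in ?\<mu>. s y = \<eta> y" if y: "y \<in> past D" for y
  proof -
    define C where "C = - {s::'s \<Rightarrow> 'e. s y \<in> {\<eta> y}}"
    have C: "C \<in> Fsig (past D \<union> outer D)"
      unfolding C_def using y by (intro Fsig_Compl coordinate_in_Fsig) auto
    have C': "C \<in> Fsig (- future D)" using C Fsig_past_outer_not_future[OF D] by blast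
    have "emeasure ?\<mu> C = 0"
      using emeasure_kmeasure[OF POS D C'] kernel_proper[OF POS D C, of \<eta>] by (simp add: C_def)
    then have "C \<in> null_sets ?\<mu>" using C' kmeasure_sets[OF POS D] by (auto intro: null_setsI)
    then show ?thesis by (rule AE_I') (auto simp: C_def)
  qed
  then show ?thesis by (subst AE_ball_countable) (auto intro: countableI_type)
qed

definition maximal_in :: "('s::order) \<Rightarrow> 's set \<Rightarrow> bool" where
  "maximal_in x D \<longleftrightarrow> x \<in> D \<and> (\<forall>y\<in>D. \<not> x < y)"

lemma finite_has_maximal_in:
  "finite D \<Longrightarrow> D \<noteq> {} \<Longrightarrow> \<exists>x. maximal_in x D"
  using finite_has_maximal[of D] unfolding maximal_in_def by (metis order.strict_iff_order)

lemma time_box_singleton: "time_box {x}"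
  unfolding time_box_def past_def future_def by auto

lemma time_box_remove_maximal:
  assumes D: "time_box D" and x: "maximal_in x D"
  shows "time_box (D - {x})"
  unfolding time_box_def
proof
  show "finite (D - {x})" using D by (simp add: time_box_def)
  show "past (D - {x}) \<inter> future (D - {x}) = {}"
  proof (rule ccontr)
    assume "past (D - {x}) \<inter> future (D - {x}) \<noteq> {}"
    then obtain z y1 y2 where z: "z \<notin> D - {x}" "y1 \<in> D - {x}" "z < y1" "y2 \<in> D - {x}" "y2 < z"
      unfolding past_def future_def by blast
    have "z \<noteq> x" using x z by (auto simp: maximal_in_def)
    then have "z \<in> past D \<inter> future D" using z unfolding past_def future_def by auto
    then show False using D unfolding time_box_def by blast
  qed
qed

lemma past_remove_maximal: "maximal_in x D \<Longrightarrow> past (D - {x}) \<subseteq> past D"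
  unfolding past_def maximal_in_def by auto

lemma remove_maximal_past_outer:
  "maximal_in x D \<Longrightarrow> D - {x} \<subseteq> past {x} \<union> outer {x}"
  unfolding maximal_in_def past_def outer_def by (auto simp: order.order_iff_strict)

lemma past_singleton_subset:
  "x \<in> D \<Longrightarrow> past {x} \<subseteq> past D \<union> (D - {x})"
  unfolding past_def by auto

lemma maximal_not_future: "maximal_in x D \<Longrightarrow> D \<subseteq> - future {x}"
  unfolding maximal_in_def future_def by auto

lemma not_future_self: "L \<subseteq> - future L"
  unfolding future_def by auto

context
  fixes g :: "('s::{order,countable}) set \<Rightarrow> ('s, 'e) kernel"
  assumes POS: "POS g"
begin

lemma kernel_marginal:
  assumes L: "time_box L" and D: "time_box D" and "L \<subseteq> D" and "past L \<subseteq> past D"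
    and A: "A \<in> Fsig L" and \<xi>: "\<forall>y\<in>past D. \<xi> y = \<eta> y"
  shows "g D A \<eta> = g L A \<xi>"
proof -
  let ?\<mu> = "kmeasure D (g D) \<eta>"
  have A_L: "A \<in> Fsig (- future L)"
    using A Fsig_mono[OF not_future_self[of L]] by blast
  have "L \<subseteq> - future D" using \<open>L \<subseteq> D\<close> not_future_self[of D] by blast
  then have A_D: "A \<in> Fsig (- future D)" using A Fsig_mono by blast
  have "ennreal (g D A \<eta>) = (\<integral>\<^sup>+ s. ennreal (g L A s) \<partial>?\<mu>)"
    using kernel_consistency[OF POS L D \<open>L \<subseteq> D\<close> A_L A_D] .
  also have "\<dots> = (\<integral>\<^sup>+ s. ennreal (g L A \<xi>) \<partial>?\<mu>)"
    using AE_kmeasure_past[OF POS D, of \<eta>]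
  proof (intro nn_integral_cong_AE, eventually_elim)
    case (elim s)
    then have "\<forall>y\<in>past L. s y = \<xi> y" using \<xi> \<open>past L \<subseteq> past D\<close> by auto
    then have "g L A s = g L A \<xi>" by (rule kernel_depends_on_past[OF POS L A])
    then show ?case by simp
  qed
  also have "\<dots> = ennreal (g L A \<xi>)" using nn_integral_kmeasure_const[OF POS D] .
  finally show ?thesis using kernel_nonneg[OF POS L A_L] kernel_nonneg[OF POS D A_D] by simp
qed

lemma kernel_chain_maximal:
  assumes D: "time_box D" and x: "maximal_in x D"
    and B: "B \<in> Fsig {x}" and \<xi>: "\<forall>y\<in>past D. \<xi> y = \<eta> y"
  shows "g D (cylinder (D - {x}) \<xi> \<inter> B) \<eta> = g {x} B \<xi> * g D (cylinder (D - {x}) \<xi>) \<eta>"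
proof -
  let ?\<mu> = "kmeasure D (g D) \<eta>" and ?A = "cylinder (D - {x}) \<xi>"
  have finD: "finite D" using D by (simp add: time_box_def)
  have x_tb: "time_box {x}" by (rule time_box_singleton)
  have xD: "x \<in> D" using x by (simp add: maximal_in_def)
  have A_x: "?A \<in> Fsig (past {x} \<union> outer {x})"
    using finD remove_maximal_past_outer[OF x] by (intro cylinder_in_Fsig) auto
  have A_D: "?A \<in> Fsig (- future D)"
    using finD not_future_self[of D] by (intro cylinder_in_Fsig) auto
  have B_D: "B \<in> Fsig D" using B Fsig_mono[of "{x}" D] xD by blast
  have B_x: "B \<in> Fsig (- future {x})" using B Fsig_mono[OF not_future_self[of "{x}"]] by blast
  have "?A \<inter> B \<in> Fsig D" using finD by (intro Fsig_Int[OF _ B_D] cylinder_in_Fsig) auto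
  then have AB_D: "?A \<inter> B \<in> Fsig (- future D)" and AB_x: "?A \<inter> B \<in> Fsig (- future {x})"
    using Fsig_mono[OF not_future_self[of D]] Fsig_mono[OF maximal_not_future[OF x]] by blast+
  have "ennreal (g D (?A \<inter> B) \<eta>) = (\<integral>\<^sup>+ s. ennreal (g {x} (?A \<inter> B) s) \<partial>?\<mu>)"
    using kernel_consistency[OF POS x_tb D _ AB_x AB_D] xD by simp
  also have "\<dots> = (\<integral>\<^sup>+ s. ennreal (g {x} B \<xi>) * indicator ?A s \<partial>?\<mu>)"
    using AE_kmeasure_past[OF POS D, of \<eta>]
  proof (intro nn_integral_cong_AE, eventually_elim)
    case (elim s)
    show ?case
    proof (cases "s \<in> ?A")
      case True
      then have "\<forall>y\<in>past {x}. s y = \<xi> y"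
        using elim \<xi> past_singleton_subset[OF xD] by (auto simp: cylinder_def)
      then have "g {x} B s = g {x} B \<xi>" by (rule kernel_depends_on_past[OF POS x_tb B])
      then show ?thesis using kernel_restrict[OF POS x_tb A_x B_x, of s] True by simp
    next
      case False
      then show ?thesis using kernel_restrict[OF POS x_tb A_x B_x, of s] by simp
    qed
  qed
  also have "\<dots> = ennreal (g {x} B \<xi>) * emeasure ?\<mu> ?A"
    using A_D kmeasure_sets[OF POS D] by (intro nn_integral_cmult_indicator) simp
  also have "\<dots> = ennreal (g {x} B \<xi> * g D ?A \<eta>)"
    using emeasure_kmeasure[OF POS D A_D] kernel_nonneg[OF POS x_tb B_x]
      kernel_nonneg[OF POS D A_D] by (simp add: ennreal_mult)
  finally show ?thesis
    using kernel_nonneg[OF POS D AB_D] kernel_nonneg[OF POS x_tb B_x]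
      kernel_nonneg[OF POS D A_D] by simp
qed

lemma kernel_product_formula:
  assumes "time_box D" and "\<forall>y\<in>D. \<xi> y = \<sigma> y" and "\<forall>y\<in>past D \<union> outer D. \<xi> y = \<eta> y"
  shows "g D (cylinder D \<sigma>) \<eta> = (\<Prod>x\<in>D. g {x} {\<zeta>. \<zeta> x = \<sigma> x} \<xi>)"
  using assms
proof (induction "card D" arbitrary: D \<eta> rule: less_induct)
  case less
  have D: "time_box D" and finD: "finite D" using less.prems(1) by (auto simp: time_box_def)
  have \<xi>_past: "\<forall>y\<in>past D. \<xi> y = \<eta> y" using less.prems(3) by simp
  show ?case
  proof (cases "D = {}")
    case True
    then show ?thesis
      using proper_kernel[OF POS D] by (simp add: cylinder_def proper_oriented_kernel_def)
  next
    case False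
    then obtain x where x: "maximal_in x D" using finite_has_maximal_in[OF finD] by blast
    define L where "L = D - {x}"
    have xD: "x \<in> D" using x by (simp add: maximal_in_def)
    have L: "time_box L" unfolding L_def using time_box_remove_maximal[OF D x] .
    have L_past: "past L \<subseteq> past D" unfolding L_def using past_remove_maximal[OF x] .
    have cyl_L: "cylinder L \<sigma> = cylinder L \<xi>"
      using less.prems(2) by (intro cylinder_cong) (auto simp: L_def)
    have cyl: "cylinder D \<sigma> = cylinder L \<xi> \<inter> {\<zeta>. \<zeta> x = \<sigma> x}"
      using cylinder_remove[OF xD, of \<sigma>] cyl_L by (simp add: L_def)
    have "card L < card D" unfolding L_def using finD xD by (rule card_Diff1_less)
    then have IH: "g L (cylinder L \<xi>) \<xi> = (\<Prod>y\<in>L. g {y} {\<zeta>. \<zeta> y = \<sigma> y} \<xi>)"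
      using less.hyps[of L \<xi>] L less.prems(2) cyl_L by (auto simp: L_def)
    have "g D (cylinder D \<sigma>) \<eta> = g {x} {\<zeta>. \<zeta> x = \<sigma> x} \<xi> * g D (cylinder L \<xi>) \<eta>"
      unfolding cyl L_def
      by (rule kernel_chain_maximal[OF D x coordinate_in_Fsig[of x "{x}" "{\<sigma> x}", simplified] \<xi>_past])
    also have "g D (cylinder L \<xi>) \<eta> = g L (cylinder L \<xi>) \<xi>"
      using L finD by (intro kernel_marginal[OF L D _ L_past _ \<xi>_past] cylinder_in_Fsig)
        (auto simp: L_def)
    finally show ?thesis
      using IH prod.remove[OF finD xD, of "\<lambda>y. g {y} {\<zeta>. \<zeta> y = \<sigma> y} \<xi>"] by (simp add: L_def)
  qed
qed

end

theorem mainTheorem18: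
  fixes g :: "('s::{order,countable}) set \<Rightarrow> ('s, 'e::countable) kernel"
    and D :: "'s set" and \<eta> \<sigma> \<xi> :: "'s \<Rightarrow> 'e"
  assumes "standing_assms TYPE('s)"
    and "POS g"
    and "time_box D"
    and "\<forall>y\<in>D. \<xi> y = \<sigma> y"
    and "\<forall>y\<in>past D \<union> outer D. \<xi> y = \<eta> y"
  shows "g D {\<zeta>. \<forall>x\<in>D. \<zeta> x = \<sigma> x} \<eta>
           = (\<Prod>x\<in>D. g {x} {\<zeta>. \<zeta> x = \<sigma> x} \<xi>)"
  using kernel_product_formula[OF assms(2-5)] by (simp add: cylinder_def)

end
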